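(* For every $R>0$, the set $\mathcal P^\star_R$ of $R$-special measures is closed in $\mathcal P(C([0,T],\mathbb R^D))$ under weak convergence (and therefore also under the Wasserstein $L^1$ metric).
   Context: Fix $T>0$, integers $L\ge3$, $D_0,\dots,D_L\ge1$, $D=\sum_\ell D_\ell$; write $a\in\mathbb R^D$ as $(a^{(0)},\dots,a^{(L)})$ with $a^{(\ell)}\in\mathbb R^{D_\ell}$. Fix probability measures $\mu_0^{(\ell)}\in\mathcal P(\mathbb R^{D_\ell})$ with finite first moment and let $\mu_0=\prod_{\ell=0}^L\mu_0^{(\ell)}$. $C([0,T],\mathbb R^D)$ carries the sup norm. $\mathcal P_R$: the set of $\nu_{[0,T]}\in\mathcal P(C([0,T],\mathbb R^D))$ such that, if $\Theta\sim\nu_{[0,T]}$, then (1) $\Theta(0)\sim\mu_0$; (2) the coordinate trajectories $\Theta^{(0)}$ and $\Theta^{(L)}$ are a.s. constant in time; (3) each $\Theta^{(\ell)}$ is $R$-Lipschitz in time. $R$-special function: $F:\mathbb R^{D_{L-1}}\times\mathbb R^{D_L}\to C([0,T],\mathbb R^{D_{L-1}})$ such that (1) for each $a=(a^{(L-1)},a^{(L)})$, $t\mapsto F(a)(t)$ is $R$-Lipschitz and $F(a)(0)=a^{(L-1)}$; (2) for each $t\in[0,T]$, $a\mapsto F(a)(t)$ is $e^{Rt}$-Lipschitz. $R$-special measure: $\mu_{[0,T]}\in\mathcal P_R$ for which there is an $R$-special function $F_\mu$ such that, if $\Theta\sim\mu_{[0,T]}$, then a.s. for all $t\in[0,T]$,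 $\Theta^{(L-1)}(t)=F_\mu(\Theta^{(L-1)}(0),\Theta^{(L)}(0))(t)$. $\mathcal P^\star_R$ is the set of $R$-special measures. *)

theory Defs
  imports "HOL-Analysis.Analysis" "HOL-Probability.Probability"
begin

text \<open>Coordinates of R^D are indexed by a finite type 'n; the map blk assigns each
coordinate to its block number in 0..L.  The block R^{D_l} is identified with the
coordinate subspace of vectors vanishing outside the block.\<close>

definition blockset :: "('n \<Rightarrow> nat) \<Rightarrow> nat \<Rightarrow> 'n set" where
  "blockset blk l = {i. blk i = l}"

definition bproj :: "'n set \<Rightarrow> real^'n \<Rightarrow> real^'n" where
  "bproj S x = (\<chi> i. if i \<in> S then x $ i else 0)"

definition init_block_measure :: "('n::finite \<Rightarrow> nat) \<Rightarrow> nat \<Rightarrow> (real^'n) measure \<Rightarrow> bool" where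
  "init_block_measure blk l \<mu> \<longleftrightarrow>
     prob_space \<mu> \<and> sets \<mu> = sets borel \<and>
     (AE x in \<mu>. bproj (blockset blk l) x = x) \<and>
     integrable \<mu> (\<lambda>x. norm x)"

text \<open>mu0 = product of the mu0^(l), as a measure on R^D.\<close>
definition init_measure :: "nat \<Rightarrow> (nat \<Rightarrow> (real^'n::finite) measure) \<Rightarrow> (real^'n) measure" where
  "init_measure L \<mu>0b = distr (PiM {..L} \<mu>0b) borel (\<lambda>X. \<Sum>l\<le>L. X l)"

text \<open>C([0,T],R^D) is identified (isometrically, sup norm) with the bounded continuous
functions on the real line that are constant outside [0,T].\<close>
definition paths :: "real \<Rightarrow> (real \<Rightarrow>\<^sub>C 'a::metric_space) set" where
  "paths T = {\<Theta>. \<forall>t. apply_bcontfun \<Theta> t = apply_bcontfun \<Theta> (max 0 (min T t))}"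

definition path_prob_measure :: "real \<Rightarrow> (real \<Rightarrow>\<^sub>C 'a::metric_space) measure \<Rightarrow> bool" where
  "path_prob_measure T M \<longleftrightarrow>
     prob_space M \<and> sets M = sets borel \<and> (AE \<Theta> in M. \<Theta> \<in> paths T)"

definition weak_conv_paths ::
  "real \<Rightarrow> (nat \<Rightarrow> (real \<Rightarrow>\<^sub>C 'a::metric_space) measure) \<Rightarrow> (real \<Rightarrow>\<^sub>C 'a) measure \<Rightarrow> bool" where
  "weak_conv_paths T Ms M \<longleftrightarrow>
     (\<forall>f :: (real \<Rightarrow>\<^sub>C 'a) \<Rightarrow> real. continuous_on (paths T) f \<and> bounded (f ` paths T) \<longrightarrow>
        (\<lambda>n. (\<integral>\<Theta>\<in>paths T. f \<Theta> \<partial>Ms n)) \<longlonglongrightarrow> (\<integral>\<Theta>\<in>paths T. f \<Theta> \<partial>M))"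

definition in_PR ::
  "real \<Rightarrow> nat \<Rightarrow> ('n::finite \<Rightarrow> nat) \<Rightarrow> (nat \<Rightarrow> (real^'n) measure) \<Rightarrow> real
     \<Rightarrow> (real \<Rightarrow>\<^sub>C (real^'n)) measure \<Rightarrow> bool" where
  "in_PR T L blk \<mu>0b R M \<longleftrightarrow>
     path_prob_measure T M \<and>
     distr M borel (\<lambda>\<Theta>. apply_bcontfun \<Theta> 0) = init_measure L \<mu>0b \<and>
     (AE \<Theta> in M. \<forall>t\<in>{0..T}. \<forall>i. (blk i = 0 \<or> blk i = L) \<longrightarrow> apply_bcontfun \<Theta> t $ i = apply_bcontfun \<Theta> 0 $ i) \<and>
     (AE \<Theta> in M. \<forall>l\<le>L. \<forall>s\<in>{0..T}. \<forall>t\<in>{0..T}.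
        norm (bproj (blockset blk l) (apply_bcontfun \<Theta> t - apply_bcontfun \<Theta> s)) \<le> R * \<bar>t - s\<bar>)"

text \<open>R-special functions F : R^{D_{L-1}} x R^{D_L} -> C([0,T],R^{D_{L-1}}), encoded as
maps on R^D whose relevant input coordinates are the blocks L-1, L and whose relevant
output coordinates are block L-1 (condition (2) forces dependence only on those inputs).\<close>
definition special_function ::
  "real \<Rightarrow> nat \<Rightarrow> ('n::finite \<Rightarrow> nat) \<Rightarrow> real \<Rightarrow> (real^'n \<Rightarrow> real \<Rightarrow> real^'n) \<Rightarrow> bool" where
  "special_function T L blk R F \<longleftrightarrow>
     (\<forall>a. \<forall>s\<in>{0..T}. \<forall>t\<in>{0..T}.
        norm (bproj (blockset blk (L - 1)) (F a t - F a s)) \<le> R * \<bar>t - s\<bar>) \<and>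
     (\<forall>a. bproj (blockset blk (L - 1)) (F a 0) = bproj (blockset blk (L - 1)) a) \<and>
     (\<forall>t\<in>{0..T}. \<forall>a b.
        norm (bproj (blockset blk (L - 1)) (F a t - F b t))
          \<le> exp (R * t) * norm (bproj (blockset blk (L - 1) \<union> blockset blk L) (a - b)))"

definition special_measure ::
  "real \<Rightarrow> nat \<Rightarrow> ('n::finite \<Rightarrow> nat) \<Rightarrow> (nat \<Rightarrow> (real^'n) measure) \<Rightarrow> real
     \<Rightarrow> (real \<Rightarrow>\<^sub>C (real^'n)) measure \<Rightarrow> bool" where
  "special_measure T L blk \<mu>0b R M \<longleftrightarrow>
     in_PR T L blk \<mu>0b R M \<and>
     (\<exists>F. special_function T L blk R F \<and>
        (AE \<Theta> in M. \<forall>t\<in>{0..T}.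
           bproj (blockset blk (L - 1)) (apply_bcontfun \<Theta> t) = bproj (blockset blk (L - 1)) (F (apply_bcontfun \<Theta> 0) t)))"

end

theory Submission
  imports Defs "HOL-Complex_Analysis.Great_Picard"
begin

(*
  The conditions defining P_R are of two kinds. The initial law is the push-forward under the
  continuous map Theta |-> Theta(0), and it survives the limit because integrals of bounded
  continuous functions determine a finite Borel measure. The other conditions say that almost
  every path lies in a fixed closed subset of path space, which passes to weak limits by the
  portmanteau inequality for closed sets.

  For the special relation, the R-special functions F_n of the approximating measures are
  uniformly Lipschitz in time and in the initial point, so a diagonal argument over a countable
  dense set gives a subsequence converging pointwise to a function F, which is again R-special.
  For fixed t, all approximating measures give Theta(0) the same law mu_0, so the expected
  truncated distance between Theta^(L-1)(t) and F(Theta(0))(t) under the n-th measure is an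
  integral against mu_0, which tends to 0 by dominated convergence; weak convergence makes it
  vanish under the limit. This holds simultaneously for all rational t, hence by continuity for
  all t.
*)

lemma bproj_diff: "bproj S (x - y) = bproj S x - bproj S y"
  by (simp add: bproj_def vec_eq_iff)

lemma bproj_idem [simp]: "bproj S (bproj S x) = bproj S x"
  by (simp add: bproj_def vec_eq_iff)

lemma norm_bproj_le: "norm (bproj S (x :: real^'n)) \<le> norm x"
  unfolding norm_vec_def by (rule L2_set_mono) (auto simp: bproj_def)

lemma bounded_linear_bproj: "bounded_linear (bproj S :: real^'n \<Rightarrow> real^'n)"
proof (rule bounded_linear_intro[where K = 1])
  show "bproj S (x + y) = bproj S x + bproj S y" "bproj S (r *\<^sub>R x) = r *\<^sub>R bproj S x"
    for r and x y :: "real^'n"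
    by (simp_all add: bproj_def vec_eq_iff)
  show "norm (bproj S x) \<le> norm x * 1" for x :: "real^'n"
    using norm_bproj_le by simp
qed

lemmas continuous_on_bproj [continuous_intros] =
  bounded_linear.continuous_on[OF bounded_linear_bproj]

lemmas tendsto_bproj [tendsto_intros] = bounded_linear.tendsto[OF bounded_linear_bproj]

lemma closure_Rats: "closure (\<rat> :: real set) = UNIV"
proof -
  have "x \<in> closure \<rat>" for x :: real
    unfolding closure_approachable
  proof (intro allI impI)
    fix e :: real
    assume "e > 0"
    then obtain q where "q \<in> \<rat>" "x < q" "q < x + e"
      using Rats_dense_in_real[of x "x + e"] by auto
    then show "\<exists>q\<in>\<rat>. dist q x < e"
      by (intro bexI[of _ q]) (auto simp: dist_real_def)
  qed
  then show ?thesis by auto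
qed

lemma closure_Rats_Int_atLeastAtMost:
  fixes a b :: real
  assumes "a < b"
  shows "closure (\<rat> \<inter> {a..b}) = {a..b}"
  using closure_convex_Int_superset[of "{a..b}" \<rat>] assms
  by (auto simp: closure_Rats Int_commute)

lemma continuous_on_eq_on_closure:
  fixes f g :: "'a::topological_space \<Rightarrow> 'b::metric_space"
  assumes "continuous_on (closure S) f" "continuous_on (closure S) g"
    and "\<And>x. x \<in> S \<Longrightarrow> f x = g x" and "x \<in> closure S"
  shows "f x = g x"
proof -
  have "continuous_on (closure S) (\<lambda>x. dist (f x) (g x))"
    using assms(1,2) by (intro continuous_intros)
  then have "(\<lambda>x. dist (f x) (g x)) ` closure S \<subseteq> {0}"
    by (rule image_closure_subset) (auto simp: assms(3))
  then show ?thesis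
    using assms(4) by auto
qed

lemma closed_Collect_imp_const: "closed {x. Q x} \<Longrightarrow> closed {x. P \<longrightarrow> Q x}"
  by (cases P) auto

lemma bounded_range_if_dist_le:
  fixes f g :: "'a \<Rightarrow> 'b::metric_space"
  assumes "bounded (range f)" and "\<And>x. dist (f x) (g x) \<le> C"
  shows "bounded (range g)"
proof -
  obtain a r where r: "\<And>x. dist a (f x) \<le> r"
    using assms(1) unfolding bounded_def by blast
  have "dist a (g x) \<le> r + C" for x
    using dist_triangle[of a "g x" "f x"] r[of x] assms(2)[of x] by linarith
  then show ?thesis
    unfolding bounded_def by blast
qed

lemma pointwise_bounded_convergent_subsequence:
  fixes f :: "nat \<Rightarrow> 'a \<Rightarrow> 'b::{real_normed_vector,heine_borel}"
  assumes "countable S" and bdd: "\<And>x. x \<in> S \<Longrightarrow> bounded (range (\<lambda>n. f n x))"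
  obtains k where "strict_mono k" "\<And>x. x \<in> S \<Longrightarrow> convergent (\<lambda>n. f (k n) x)"
proof -
  have "\<forall>x\<in>S. \<exists>b. \<forall>n. norm (f n x) \<le> b"
    using bdd by (auto simp: bounded_iff)
  then obtain B where B: "\<And>x n. x \<in> S \<Longrightarrow> norm (f n x) \<le> B x"
    by metis
  \<comment> \<open>Rescaling by the pointwise bound makes the family uniformly bounded.\<close>
  define g where "g n x = (1 / (1 + \<bar>B x\<bar>)) *\<^sub>R f n x" for n x
  have "norm (g n x) \<le> 1" if "x \<in> S" for n x
    using B[OF that, of n] by (simp add: g_def divide_le_eq add_pos_nonneg)
  then obtain k where k: "strict_mono k" and conv: "\<And>x. x \<in> S \<Longrightarrow> \<exists>l. (\<lambda>n. g (k n) x) \<longlonglongrightarrow> l"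
    using function_convergent_subsequence[OF \<open>countable S\<close>, of g 1] by blast
  have "convergent (\<lambda>n. f (k n) x)" if x: "x \<in> S" for x
  proof -
    obtain l where "(\<lambda>n. g (k n) x) \<longlonglongrightarrow> l"
      using conv[OF x] by blast
    then have "(\<lambda>n. (1 + \<bar>B x\<bar>) *\<^sub>R g (k n) x) \<longlonglongrightarrow> (1 + \<bar>B x\<bar>) *\<^sub>R l"
      by (intro tendsto_intros)
    moreover have "(1 + \<bar>B x\<bar>) *\<^sub>R g (k n) x = f (k n) x" for n
      by (simp add: g_def add_nonneg_eq_0_iff)
    ultimately show ?thesis
      unfolding convergent_def by auto
  qed
  with k that show ?thesis by blast
qed

lemma convergent_if_approximable:
  fixes g :: "nat \<Rightarrow> 'a \<Rightarrow> 'b::complete_space"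
  assumes conv: "\<And>y. y \<in> D \<Longrightarrow> convergent (\<lambda>n. g n y)"
    and approx: "\<And>e. e > 0 \<Longrightarrow> \<exists>y\<in>D. \<forall>n. dist (g n x) (g n y) < e"
  shows "convergent (\<lambda>n. g n x)"
proof -
  have "Cauchy (\<lambda>n. g n x)"
  proof (rule metric_CauchyI)
    fix e :: real
    assume "e > 0"
    then obtain y where "y \<in> D" and y: "\<And>n. dist (g n x) (g n y) < e / 3"
      using approx[of "e / 3"] by auto
    then have "Cauchy (\<lambda>n. g n y)"
      using conv Cauchy_convergent_iff by blast
    then obtain N where N: "\<And>m n. m \<ge> N \<Longrightarrow> n \<ge> N \<Longrightarrow> dist (g m y) (g n y) < e / 3"
      using metric_CauchyD[of "\<lambda>n. g n y" "e / 3"] \<open>e > 0\<close> by auto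
    have "dist (g m x) (g n x) < e" if "m \<ge> N" "n \<ge> N" for m n
    proof -
      have "dist (g m x) (g n x) \<le> dist (g m x) (g m y) + dist (g m y) (g n y) + dist (g n x) (g n y)"
        using dist_triangle[of "g m x" "g n x" "g m y"] dist_triangle[of "g m y" "g n x" "g n y"]
        by (simp add: dist_commute)
      also have "\<dots> < e / 3 + e / 3 + e / 3"
        using y[of m] y[of n] N[OF that] by linarith
      finally show ?thesis by simp
    qed
    then show "\<exists>N. \<forall>m\<ge>N. \<forall>n\<ge>N. dist (g m x) (g n x) < e"
      by blast
  qed
  then show ?thesis
    by (simp add: Cauchy_convergent_iff)
qed

lemma equi_lipschitz_convergent_subsequence:
  fixes G :: "nat \<Rightarrow> 'a::{metric_space,second_countable_topology} \<Rightarrow> real \<Rightarrow> 'b::euclidean_space"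
  assumes "0 < T" "0 \<le> R" "0 \<le> K"
    and lip_time: "\<And>n a s t. s \<in> {0..T} \<Longrightarrow> t \<in> {0..T} \<Longrightarrow> dist (G n a s) (G n a t) \<le> R * \<bar>s - t\<bar>"
    and lip_init: "\<And>n a b t. t \<in> {0..T} \<Longrightarrow> dist (G n a t) (G n b t) \<le> K * dist a b"
    and bdd: "\<And>a. bounded (range (\<lambda>n. G n a 0))"
  obtains k where "strict_mono k" "\<And>a t. t \<in> {0..T} \<Longrightarrow> convergent (\<lambda>n. G (k n) a t)"
proof -
  obtain D :: "'a set" where "countable D" and dense: "\<And>X. open X \<Longrightarrow> X \<noteq> {} \<Longrightarrow> \<exists>d\<in>D. d \<in> X"
    using countable_dense_setE by blast
  define S where "S = D \<times> (\<rat> \<inter> {0..T})"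
  have "countable S"
    unfolding S_def using \<open>countable D\<close> countable_rat by (intro countable_SIGMA) auto
  have bdd_time: "bounded (range (\<lambda>n. G n a t))" if "t \<in> {0..T}" for a t
  proof (rule bounded_range_if_dist_le[OF bdd])
    show "dist (G n a 0) (G n a t) \<le> R * T" for n
      using lip_time[of 0 t n a] that \<open>0 < T\<close> \<open>0 \<le> R\<close> by (auto intro: order_trans mult_left_mono)
  qed
  have bdd_S: "bounded (range (\<lambda>n. G n (fst x) (snd x)))" if "x \<in> S" for x
    using bdd_time that by (auto simp: S_def)
  obtain k where k: "strict_mono k" and conv_S: "\<And>x. x \<in> S \<Longrightarrow> convergent (\<lambda>n. G (k n) (fst x) (snd x))"
    using pointwise_bounded_convergent_subsequence[of S "\<lambda>n x. G n (fst x) (snd x)", OF \<open>countable S\<close> bdd_S]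
    by blast
  have "convergent (\<lambda>n. G (k n) a t)" if t: "t \<in> {0..T}" for a t
  proof (rule convergent_if_approximable[where g = "\<lambda>n x. G (k n) (fst x) (snd x)" and x = "(a, t)",
        simplified, OF conv_S])
    fix e :: real
    assume "e > 0"
    define \<delta> where "\<delta> = e / (K + R + 1)"
    have "\<delta> > 0"
      using \<open>e > 0\<close> \<open>0 \<le> R\<close> \<open>0 \<le> K\<close> by (simp add: \<delta>_def)
    obtain b where "b \<in> D" and b: "dist a b < \<delta>"
      using dense[of "ball a \<delta>"] \<open>\<delta> > 0\<close> by auto
    have "t \<in> closure (\<rat> \<inter> {0..T})"
      using closure_Rats_Int_atLeastAtMost[OF \<open>0 < T\<close>] t by simp
    then obtain q where "q \<in> \<rat>" "q \<in> {0..T}" and q: "dist q t < \<delta>"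
      using \<open>\<delta> > 0\<close> unfolding closure_approachable by blast
    have "dist (G n a t) (G n b q) < e" for n
    proof -
      have "dist (G n a t) (G n b q) \<le> dist (G n a t) (G n b t) + dist (G n b t) (G n b q)"
        by (rule dist_triangle)
      also have "\<dots> \<le> K * \<delta> + R * \<delta>"
        using lip_init[OF t, of n a b] lip_time[OF t \<open>q \<in> {0..T}\<close>, of n b] b q
          mult_left_mono[of "dist a b" \<delta> K] mult_left_mono[of "\<bar>t - q\<bar>" \<delta> R] \<open>0 \<le> K\<close> \<open>0 \<le> R\<close>
        by (simp add: dist_real_def abs_minus_commute)
      also have "\<dots> < (K + R + 1) * \<delta>"
        using \<open>\<delta> > 0\<close> by (simp add: algebra_simps)
      also have "\<dots> = e"
        using \<open>0 \<le> R\<close> \<open>0 \<le> K\<close> by (simp add: \<delta>_def)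
      finally show ?thesis .
    qed
    with \<open>b \<in> D\<close> \<open>q \<in> \<rat>\<close> \<open>q \<in> {0..T}\<close>
    show "\<exists>x\<in>S. \<forall>n. dist (G (k n) a t) (G (k n) (fst x) (snd x)) < e"
      by (intro bexI[of _ "(b, q)"]) (auto simp: S_def)
  qed
  with k that show ?thesis by blast
qed

lemma borel_measurable_continuous_on_sets_borel:
  assumes "sets M = sets borel" "continuous_on UNIV f"
  shows "f \<in> borel_measurable M"
  using borel_measurable_continuous_onI[OF assms(2)] by (simp add: measurable_cong_sets[OF assms(1) refl])

lemma integral_infdist_cutoff_tendsto_measure:
  fixes C :: "'a::metric_space set"
  assumes "closed C" "C \<noteq> {}" "finite_measure m" "sets m = sets borel"
  shows "(\<lambda>j. \<integral>x. max 0 (1 - real j * infdist x C) \<partial>m) \<longlonglongrightarrow> measure m C"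
proof -
  interpret finite_measure m
    by (rule assms(3))
  have lim: "(\<lambda>j. max 0 (1 - real j * infdist x C)) \<longlonglongrightarrow> indicator C x" for x
  proof (cases "x \<in> C")
    case False
    then have "infdist x C > 0"
      using in_closure_iff_infdist_zero[OF assms(2)] assms(1) infdist_nonneg[of x C] by auto
    then obtain N :: nat where "1 / infdist x C < N"
      using reals_Archimedean2 by blast
    then have "1 < real N * infdist x C"
      using \<open>infdist x C > 0\<close> by (simp add: divide_less_eq mult.commute)
    moreover have "real N * infdist x C \<le> real j * infdist x C" if "N \<le> j" for j
      using that \<open>infdist x C > 0\<close> by (simp add: mult_right_mono)
    ultimately have "max 0 (1 - real j * infdist x C) = indicator C x" if "N \<le> j" for j
      using False that by fastforce
    then show ?thesis
      by (intro tendsto_eventually eventually_sequentiallyI)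
  qed simp
  have "(\<lambda>j. \<integral>x. max 0 (1 - real j * infdist x C) \<partial>m) \<longlonglongrightarrow> (\<integral>x. indicator C x \<partial>m)"
  proof (rule integral_dominated_convergence[where w = "\<lambda>_. 1"])
    show "(\<lambda>x. max 0 (1 - real j * infdist x C)) \<in> borel_measurable m" for j
      by (intro borel_measurable_continuous_on_sets_borel assms(4) continuous_intros)
    show "AE x in m. norm (max 0 (1 - real j * infdist x C)) \<le> 1" for j
      by (auto simp: infdist_nonneg)
    show "indicator C \<in> borel_measurable m"
      using assms(1,4) by (intro borel_measurable_indicator) (simp add: borel_closed)
  qed (use lim in auto)
  then show ?thesis
    using sets_eq_imp_space_eq[OF assms(4)] by simp
qed

lemma measure_eqI_integral_continuous:
  fixes \<mu> \<nu> :: "'a::metric_space measure"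
  assumes "finite_measure \<mu>" "finite_measure \<nu>" "sets \<mu> = sets borel" "sets \<nu> = sets borel"
    and eq: "\<And>g :: 'a \<Rightarrow> real. continuous_on UNIV g \<Longrightarrow> bounded (range g) \<Longrightarrow>
               (\<integral>x. g x \<partial>\<mu>) = (\<integral>x. g x \<partial>\<nu>)"
  shows "\<mu> = \<nu>"
proof (rule measure_eqI_generator_eq[where E = "Collect closed" and \<Omega> = UNIV and A = "\<lambda>_. UNIV"])
  have "sets (borel :: 'a measure) = sigma_sets UNIV (Collect closed)"
    by (simp add: borel_eq_closed sets_measure_of)
  then show "sets \<mu> = sigma_sets UNIV (Collect closed)" "sets \<nu> = sigma_sets UNIV (Collect closed)"
    using assms(3,4) by simp_all
  show "emeasure \<mu> C = emeasure \<nu> C" if "C \<in> Collect closed" for C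
  proof (cases "C = {}")
    case False
    have "bounded (range (\<lambda>x. max 0 (1 - real j * infdist x C)))" for j
      unfolding bounded_iff by (intro exI[of _ 1]) (auto simp: infdist_nonneg)
    then have "(\<lambda>j. \<integral>x. max 0 (1 - real j * infdist x C) \<partial>\<mu>) = (\<lambda>j. \<integral>x. max 0 (1 - real j * infdist x C) \<partial>\<nu>)"
      by (intro ext eq continuous_intros)
    moreover have "closed C"
      using that by simp
    ultimately have "measure \<mu> C = measure \<nu> C"
      using integral_infdist_cutoff_tendsto_measure[OF _ False] assms(1-4) LIMSEQ_unique by metis
    then show ?thesis
      using assms(1-4) that by (simp add: finite_measure.emeasure_eq_measure)
  qed simp
  show "emeasure \<mu> UNIV \<noteq> \<infinity>"
    using finite_measure.emeasure_finite[OF assms(1), of "space \<mu>"] sets_eq_imp_space_eq[OF assms(3)] by simp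
qed (auto simp: Int_stable_def)

lemma tendsto_integral_truncated_dist:
  fixes \<phi> :: "nat \<Rightarrow> 'a::metric_space \<Rightarrow> 'b::metric_space"
  assumes "finite_measure \<nu>" "sets \<nu> = sets borel"
    and "\<And>n. continuous_on UNIV (\<phi> n)" "continuous_on UNIV \<phi>_lim"
    and lim: "\<And>c. (\<lambda>n. \<phi> n c) \<longlonglongrightarrow> \<phi>_lim c"
  shows "(\<lambda>n. \<integral>c. min 1 (dist (\<phi> n c) (\<phi>_lim c)) \<partial>\<nu>) \<longlonglongrightarrow> 0"
proof -
  interpret finite_measure \<nu>
    by (rule assms(1))
  have "(\<lambda>n. \<integral>c. min 1 (dist (\<phi> n c) (\<phi>_lim c)) \<partial>\<nu>) \<longlonglongrightarrow> (\<integral>c. 0 \<partial>\<nu>)"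
  proof (rule integral_dominated_convergence[where w = "\<lambda>_. 1"])
    show "(\<lambda>c. min 1 (dist (\<phi> n c) (\<phi>_lim c))) \<in> borel_measurable \<nu>" for n
      using assms(3,4) by (intro borel_measurable_continuous_on_sets_borel assms(2) continuous_intros)
    have "(\<lambda>n. min 1 (dist (\<phi> n c) (\<phi>_lim c))) \<longlonglongrightarrow> min 1 (dist (\<phi>_lim c) (\<phi>_lim c))" for c
      by (intro tendsto_intros lim)
    then show "AE c in \<nu>. (\<lambda>n. min 1 (dist (\<phi> n c) (\<phi>_lim c))) \<longlonglongrightarrow> 0"
      by simp
  qed auto
  then show ?thesis
    by simp
qed

abbreviation bproj_Lm1 :: "('n \<Rightarrow> nat) \<Rightarrow> nat \<Rightarrow> real^'n \<Rightarrow> real^'n" where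
  "bproj_Lm1 blk L \<equiv> bproj (blockset blk (L - 1))"

lemma special_function_lipschitz_time:
  assumes "special_function T L blk R F" "s \<in> {0..T}" "t \<in> {0..T}"
  shows "dist (bproj_Lm1 blk L (F a s)) (bproj_Lm1 blk L (F a t)) \<le> R * \<bar>s - t\<bar>"
  using assms unfolding special_function_def by (simp add: dist_norm bproj_diff)

lemma special_function_initial:
  "special_function T L blk R F \<Longrightarrow> bproj_Lm1 blk L (F a 0) = bproj_Lm1 blk L a"
  unfolding special_function_def by blast

lemma special_function_lipschitz_initial:
  assumes "special_function T L blk R F" "0 \<le> R" "t \<in> {0..T}"
  shows "dist (bproj_Lm1 blk L (F a t)) (bproj_Lm1 blk L (F b t)) \<le> exp (R * T) * dist a b"
proof -
  have "dist (bproj_Lm1 blk L (F a t)) (bproj_Lm1 blk L (F b t))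
      \<le> exp (R * t) * norm (bproj (blockset blk (L - 1) \<union> blockset blk L) (a - b))"
    using assms(1,3) unfolding special_function_def by (simp add: dist_norm bproj_diff)
  also have "\<dots> \<le> exp (R * T) * dist a b"
    using assms(2,3) by (intro mult_mono) (auto simp: dist_norm norm_bproj_le mult_left_mono)
  finally show ?thesis .
qed

lemma special_function_continuous_on_time:
  assumes "special_function T L blk R F" "0 \<le> R"
  shows "continuous_on {0..T} (\<lambda>t. bproj_Lm1 blk L (F a t))"
  by (rule lipschitz_on_continuous_on[OF lipschitz_onI[of "{0..T}" _ R]])
    (use special_function_lipschitz_time[OF assms(1)] assms(2) in \<open>auto simp: dist_real_def\<close>)

lemma special_function_continuous_on_initial:
  assumes "special_function T L blk R F" "0 \<le> R" "t \<in> {0..T}"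
  shows "continuous_on UNIV (\<lambda>a. bproj_Lm1 blk L (F a t))"
  by (rule lipschitz_on_continuous_on[OF lipschitz_onI[of UNIV _ "exp (R * T)"]])
    (use special_function_lipschitz_initial[OF assms] in auto)

lemma special_function_pointwise_limit:
  fixes Fs :: "nat \<Rightarrow> real^'n \<Rightarrow> real \<Rightarrow> real^'n"
  assumes special: "\<And>n. special_function T L blk R (Fs n)" and "0 \<le> T"
    and lim: "\<And>a t. t \<in> {0..T} \<Longrightarrow> (\<lambda>n. bproj_Lm1 blk L (Fs n a t)) \<longlonglongrightarrow> bproj_Lm1 blk L (F a t)"
  shows "special_function T L blk R F"
  unfolding special_function_def bproj_diff
proof (intro conjI allI ballI)
  fix a s t
  assume "s \<in> {0..T}" "t \<in> {0..T}"
  then have "(\<lambda>n. norm (bproj_Lm1 blk L (Fs n a t) - bproj_Lm1 blk L (Fs n a s)))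
      \<longlonglongrightarrow> norm (bproj_Lm1 blk L (F a t) - bproj_Lm1 blk L (F a s))"
    by (intro tendsto_intros lim)
  then show "norm (bproj_Lm1 blk L (F a t) - bproj_Lm1 blk L (F a s)) \<le> R * \<bar>t - s\<bar>"
    by (rule LIMSEQ_le_const2) (use special \<open>s \<in> {0..T}\<close> \<open>t \<in> {0..T}\<close> in \<open>auto simp: special_function_def bproj_diff\<close>)
next
  fix a
  have "(\<lambda>n. bproj_Lm1 blk L (Fs n a 0)) \<longlonglongrightarrow> bproj_Lm1 blk L (F a 0)"
    using lim \<open>0 \<le> T\<close> by simp
  then show "bproj_Lm1 blk L (F a 0) = bproj_Lm1 blk L a"
    unfolding special_function_initial[OF special] by (simp add: LIMSEQ_const_iff)
next
  fix t a b
  assume "t \<in> {0..T}"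
  then have "(\<lambda>n. norm (bproj_Lm1 blk L (Fs n a t) - bproj_Lm1 blk L (Fs n b t)))
      \<longlonglongrightarrow> norm (bproj_Lm1 blk L (F a t) - bproj_Lm1 blk L (F b t))"
    by (intro tendsto_intros lim)
  then show "norm (bproj_Lm1 blk L (F a t) - bproj_Lm1 blk L (F b t))
      \<le> exp (R * t) * norm (bproj (blockset blk (L - 1) \<union> blockset blk L) a
                              - bproj (blockset blk (L - 1) \<union> blockset blk L) b)"
    by (rule LIMSEQ_le_const2) (use special \<open>t \<in> {0..T}\<close> in \<open>auto simp: special_function_def bproj_diff\<close>)
qed

lemma special_function_convergent_subsequence:
  fixes Fs :: "nat \<Rightarrow> real^'n \<Rightarrow> real \<Rightarrow> real^'n"
  assumes "0 < T" "0 \<le> R" and special: "\<And>n. special_function T L blk R (Fs n)"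
  obtains k F where "strict_mono k" "special_function T L blk R F"
    "\<And>a t. t \<in> {0..T} \<Longrightarrow> (\<lambda>n. bproj_Lm1 blk L (Fs (k n) a t)) \<longlonglongrightarrow> bproj_Lm1 blk L (F a t)"
proof -
  obtain k where "strict_mono k" and conv: "\<And>a t. t \<in> {0..T} \<Longrightarrow> convergent (\<lambda>n. bproj_Lm1 blk L (Fs (k n) a t))"
  proof (rule equi_lipschitz_convergent_subsequence[of T R "exp (R * T)" "\<lambda>n a t. bproj_Lm1 blk L (Fs n a t)"])
    show "bounded (range (\<lambda>n. bproj_Lm1 blk L (Fs n a 0)))" for a
      unfolding special_function_initial[OF special] by simp
  qed (use assms special_function_lipschitz_time[OF special] special_function_lipschitz_initial[OF special]
      in auto)
  define F where "F a t = lim (\<lambda>n. bproj_Lm1 blk L (Fs (k n) a t))" for a t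
  have lim: "(\<lambda>n. bproj_Lm1 blk L (Fs (k n) a t)) \<longlonglongrightarrow> bproj_Lm1 blk L (F a t)" if "t \<in> {0..T}" for a t
  proof -
    have F: "(\<lambda>n. bproj_Lm1 blk L (Fs (k n) a t)) \<longlonglongrightarrow> F a t"
      using conv[OF that] unfolding F_def by (simp add: convergent_LIMSEQ_iff)
    then have "(\<lambda>n. bproj_Lm1 blk L (bproj_Lm1 blk L (Fs (k n) a t))) \<longlonglongrightarrow> bproj_Lm1 blk L (F a t)"
      by (intro tendsto_intros)
    with F show ?thesis
      using LIMSEQ_unique by fastforce
  qed
  have "special_function T L blk R F"
    using special_function_pointwise_limit[where Fs = "\<lambda>n. Fs (k n)"] special lim \<open>0 < T\<close> by auto
  with \<open>strict_mono k\<close> lim that show ?thesis by blast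
qed

lemma continuous_on_apply_bcontfun_at [continuous_intros]:
  fixes g :: "'b::topological_space \<Rightarrow> ('c::topological_space \<Rightarrow>\<^sub>C 'a::metric_space)"
  assumes "continuous_on A g"
  shows "continuous_on A (\<lambda>x. apply_bcontfun (g x) t)"
proof -
  have "continuous_on UNIV (\<lambda>\<Theta>::'c \<Rightarrow>\<^sub>C 'a. apply_bcontfun \<Theta> t)"
    by (rule lipschitz_on_continuous_on[OF lipschitz_onI[of UNIV _ 1]]) (auto simp: dist_bounded)
  then show ?thesis
    using continuous_on_compose2[OF _ assms] by blast
qed

lemma closed_paths: "closed (paths T :: (real \<Rightarrow>\<^sub>C 'a::metric_space) set)"
  unfolding paths_def by (intro closed_Collect_all closed_Collect_eq continuous_intros continuous_on_id)

lemma path_prob_measureD: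
  assumes "path_prob_measure T M"
  shows "prob_space M" "sets M = sets borel" "AE \<Theta> in M. \<Theta> \<in> paths T"
  using assms unfolding path_prob_measure_def by auto

lemma set_integral_paths:
  fixes f :: "(real \<Rightarrow>\<^sub>C 'a::metric_space) \<Rightarrow> real"
  assumes M: "path_prob_measure T M" and f: "f \<in> borel_measurable M"
  shows "(\<integral>\<Theta>\<in>paths T. f \<Theta> \<partial>M) = (\<integral>\<Theta>. f \<Theta> \<partial>M)"
  unfolding set_lebesgue_integral_def
proof (rule integral_cong_AE)
  have "paths T \<in> sets M"
    using path_prob_measureD(2)[OF M] borel_closed[OF closed_paths] by simp
  then show "(\<lambda>\<Theta>. indicator (paths T) \<Theta> *\<^sub>R f \<Theta>) \<in> borel_measurable M"
    using f by measurable
  show "AE \<Theta> in M. indicator (paths T) \<Theta> *\<^sub>R f \<Theta> = f \<Theta>"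
    using path_prob_measureD(3)[OF M] by eventually_elim simp
qed (rule f)

lemma weak_conv_paths_subseq:
  assumes "weak_conv_paths T Ms M" "strict_mono k"
  shows "weak_conv_paths T (\<lambda>n. Ms (k n)) M"
  using assms LIMSEQ_subseq_LIMSEQ unfolding weak_conv_paths_def comp_def by blast

lemma weak_conv_paths_integral_tendsto:
  fixes f :: "(real \<Rightarrow>\<^sub>C 'a::metric_space) \<Rightarrow> real"
  assumes M: "path_prob_measure T M" and Ms: "\<And>n. path_prob_measure T (Ms n)"
    and w: "weak_conv_paths T Ms M" and f: "continuous_on UNIV f" "bounded (range f)"
  shows "(\<lambda>n. \<integral>\<Theta>. f \<Theta> \<partial>Ms n) \<longlonglongrightarrow> (\<integral>\<Theta>. f \<Theta> \<partial>M)"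
proof -
  have "continuous_on (paths T) f" "bounded (f ` paths T)"
    using f by (auto intro: continuous_on_subset bounded_subset)
  with w have "(\<lambda>n. \<integral>\<Theta>\<in>paths T. f \<Theta> \<partial>Ms n) \<longlonglongrightarrow> (\<integral>\<Theta>\<in>paths T. f \<Theta> \<partial>M)"
    unfolding weak_conv_paths_def by blast
  moreover have "f \<in> borel_measurable M" "f \<in> borel_measurable (Ms n)" for n
    using borel_measurable_continuous_on_sets_borel[OF path_prob_measureD(2) f(1)] M Ms by blast+
  ultimately show ?thesis
    using set_integral_paths[OF Ms] set_integral_paths[OF M] by simp
qed

lemma weak_conv_paths_AE_eq_0:
  fixes f :: "(real \<Rightarrow>\<^sub>C 'a::metric_space) \<Rightarrow> real"
  assumes M: "path_prob_measure T M" and Ms: "\<And>n. path_prob_measure T (Ms n)"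
    and w: "weak_conv_paths T Ms M" and f: "continuous_on UNIV f" "bounded (range f)"
    and nonneg: "\<And>\<Theta>. 0 \<le> f \<Theta>" and lim: "(\<lambda>n. \<integral>\<Theta>. f \<Theta> \<partial>Ms n) \<longlonglongrightarrow> 0"
  shows "AE \<Theta> in M. f \<Theta> = 0"
proof -
  interpret prob_space M
    by (rule path_prob_measureD(1)[OF M])
  have "(\<integral>\<Theta>. f \<Theta> \<partial>M) = 0"
    using LIMSEQ_unique[OF weak_conv_paths_integral_tendsto[OF M Ms w f] lim] .
  moreover obtain B where "\<And>\<Theta>. norm (f \<Theta>) \<le> B"
    using f(2) by (auto simp: bounded_iff)
  then have "integrable M f"
    using borel_measurable_continuous_on_sets_borel[OF path_prob_measureD(2)[OF M] f(1)]
    by (intro integrable_const_bound[of _ B]) auto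
  ultimately show ?thesis
    using integral_nonneg_eq_0_iff_AE[of M f] nonneg by simp
qed

lemma weak_conv_paths_AE_closed:
  fixes C :: "(real \<Rightarrow>\<^sub>C 'a::metric_space) set"
  assumes M: "path_prob_measure T M" and Ms: "\<And>n. path_prob_measure T (Ms n)"
    and w: "weak_conv_paths T Ms M" and "closed C" and C: "\<And>n. AE \<Theta> in Ms n. \<Theta> \<in> C"
  shows "AE \<Theta> in M. \<Theta> \<in> C"
proof -
  have "C \<noteq> {}"
    using C[of 0] prob_space.AE_False[OF path_prob_measureD(1)[OF Ms]] by auto
  define f where "f \<Theta> = min 1 (infdist \<Theta> C)" for \<Theta>
  have "continuous_on UNIV f"
    unfolding f_def by (intro continuous_intros)
  moreover have "bounded (range f)"
    unfolding f_def bounded_iff by (intro exI[of _ 1]) (auto simp: infdist_nonneg)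
  moreover have "(\<integral>\<Theta>. f \<Theta> \<partial>Ms n) = 0" for n
  proof -
    have "AE \<Theta> in Ms n. f \<Theta> = 0"
      using C[of n] by eventually_elim (simp add: f_def)
    then show ?thesis
      using integral_cong_AE[of f "Ms n" "\<lambda>_. 0"]
        borel_measurable_continuous_on_sets_borel[OF path_prob_measureD(2)[OF Ms] \<open>continuous_on UNIV f\<close>]
      by simp
  qed
  ultimately have "AE \<Theta> in M. f \<Theta> = 0"
    using weak_conv_paths_AE_eq_0[OF M Ms w] by (simp add: f_def infdist_nonneg)
  then show ?thesis
  proof eventually_elim
    case (elim \<Theta>)
    then have "infdist \<Theta> C = 0"
      by (simp add: f_def min_def split: if_splits)
    then show ?case
      using in_closure_iff_infdist_zero[OF \<open>C \<noteq> {}\<close>] \<open>closed C\<close> by simp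
  qed
qed

lemma weak_conv_paths_distr_eq:
  fixes \<pi> :: "(real \<Rightarrow>\<^sub>C 'a::metric_space) \<Rightarrow> 'b::metric_space"
  assumes M: "path_prob_measure T M" and Ms: "\<And>n. path_prob_measure T (Ms n)"
    and w: "weak_conv_paths T Ms M" and "continuous_on UNIV \<pi>" and distr: "\<And>n. distr (Ms n) borel \<pi> = \<nu>"
  shows "distr M borel \<pi> = \<nu>"
proof -
  have \<pi>_meas: "\<pi> \<in> borel_measurable M" "\<pi> \<in> borel_measurable (Ms n)" for n
    using borel_measurable_continuous_on_sets_borel[OF path_prob_measureD(2) \<open>continuous_on UNIV \<pi>\<close>] M Ms
    by blast+
  show ?thesis
  proof (rule measure_eqI_integral_continuous)
    show "finite_measure (distr M borel \<pi>)"
      using prob_space.prob_space_distr[OF path_prob_measureD(1)[OF M] \<pi>_meas(1)] by (rule prob_space.finite_measure)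
    show "finite_measure \<nu>"
      using prob_space.prob_space_distr[OF path_prob_measureD(1)[OF Ms] \<pi>_meas(2)] distr[of 0]
      by (metis prob_space.finite_measure)
    show "sets \<nu> = sets borel"
      using distr[of 0] by auto
    fix g :: "'b \<Rightarrow> real"
    assume "continuous_on UNIV g" "bounded (range g)"
    then have g_meas: "g \<in> borel_measurable borel"
      by (simp add: borel_measurable_continuous_onI)
    have "continuous_on UNIV (g \<circ> \<pi>)" "bounded (range (g \<circ> \<pi>))"
      using \<open>continuous_on UNIV g\<close> \<open>continuous_on UNIV \<pi>\<close> \<open>bounded (range g)\<close>
      by (auto intro: continuous_on_compose2 bounded_subset)
    then have "(\<lambda>n. \<integral>\<Theta>. g (\<pi> \<Theta>) \<partial>Ms n) \<longlonglongrightarrow> (\<integral>\<Theta>. g (\<pi> \<Theta>) \<partial>M)"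
      using weak_conv_paths_integral_tendsto[OF M Ms w] by (simp add: o_def)
    moreover have "(\<integral>\<Theta>. g (\<pi> \<Theta>) \<partial>Ms n) = (\<integral>x. g x \<partial>\<nu>)" for n
      using integral_distr[OF \<pi>_meas(2)[of n] g_meas] distr[of n] by simp
    ultimately have "(\<lambda>n::nat. \<integral>x. g x \<partial>\<nu>) \<longlonglongrightarrow> (\<integral>\<Theta>. g (\<pi> \<Theta>) \<partial>M)"
      by simp
    then have "(\<integral>\<Theta>. g (\<pi> \<Theta>) \<partial>M) = (\<integral>x. g x \<partial>\<nu>)"
      by (simp add: LIMSEQ_const_iff)
    then show "(\<integral>x. g x \<partial>distr M borel \<pi>) = (\<integral>x. g x \<partial>\<nu>)"
      using integral_distr[OF \<pi>_meas(1) g_meas] by simp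
  qed simp
qed

lemma weak_conv_paths_AE_eq_limit:
  fixes \<pi> :: "(real \<Rightarrow>\<^sub>C 'a::metric_space) \<Rightarrow> 'c::metric_space"
    and \<psi> :: "(real \<Rightarrow>\<^sub>C 'a) \<Rightarrow> 'b::metric_space" and \<phi> :: "nat \<Rightarrow> 'c \<Rightarrow> 'b"
  assumes M: "path_prob_measure T M" and Ms: "\<And>n. path_prob_measure T (Ms n)"
    and w: "weak_conv_paths T Ms M"
    and \<pi>: "continuous_on UNIV \<pi>" and distr: "\<And>n. distr (Ms n) borel \<pi> = \<nu>"
    and \<psi>: "continuous_on UNIV \<psi>" and \<phi>: "\<And>n. continuous_on UNIV (\<phi> n)"
    and \<phi>_lim: "continuous_on UNIV \<phi>_lim" and lim: "\<And>c. (\<lambda>n. \<phi> n c) \<longlonglongrightarrow> \<phi>_lim c"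
    and graph: "\<And>n. AE \<Theta> in Ms n. \<psi> \<Theta> = \<phi> n (\<pi> \<Theta>)"
  shows "AE \<Theta> in M. \<psi> \<Theta> = \<phi>_lim (\<pi> \<Theta>)"
proof -
  have \<pi>_meas: "\<pi> \<in> borel_measurable (Ms n)" for n
    using borel_measurable_continuous_on_sets_borel[OF path_prob_measureD(2)[OF Ms] \<pi>] .
  have "prob_space \<nu>" "sets \<nu> = sets borel"
    using prob_space.prob_space_distr[OF path_prob_measureD(1)[OF Ms] \<pi>_meas] distr[of 0] by auto
  define f where "f \<Theta> = min 1 (dist (\<psi> \<Theta>) (\<phi>_lim (\<pi> \<Theta>)))" for \<Theta>
  define h where "h n c = min 1 (dist (\<phi> n c) (\<phi>_lim c))" for n c
  have f_cont: "continuous_on UNIV f"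
    unfolding f_def using \<psi> continuous_on_compose2[OF \<phi>_lim \<pi>] by (intro continuous_intros) auto
  have h_cont: "continuous_on UNIV (h n)" for n
    unfolding h_def using \<phi> \<phi>_lim by (intro continuous_intros)
  \<comment> \<open>All Ms n give \<pi> the same law \<nu>, so the errors are integrals against one fixed measure.\<close>
  have "(\<integral>\<Theta>. f \<Theta> \<partial>Ms n) = (\<integral>c. h n c \<partial>\<nu>)" for n
  proof -
    have "(\<integral>\<Theta>. f \<Theta> \<partial>Ms n) = (\<integral>\<Theta>. h n (\<pi> \<Theta>) \<partial>Ms n)"
    proof (rule integral_cong_AE)
      show "f \<in> borel_measurable (Ms n)" "(\<lambda>\<Theta>. h n (\<pi> \<Theta>)) \<in> borel_measurable (Ms n)"
        using f_cont continuous_on_compose2[OF h_cont \<pi>]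
        by (simp_all add: borel_measurable_continuous_on_sets_borel[OF path_prob_measureD(2)[OF Ms]])
      show "AE \<Theta> in Ms n. f \<Theta> = h n (\<pi> \<Theta>)"
        using graph[of n] by eventually_elim (simp add: f_def h_def)
    qed
    also have "\<dots> = (\<integral>c. h n c \<partial>\<nu>)"
      using integral_distr[OF \<pi>_meas[of n] borel_measurable_continuous_onI[OF h_cont]] distr[of n] by simp
    finally show ?thesis .
  qed
  moreover have "(\<lambda>n. \<integral>c. h n c \<partial>\<nu>) \<longlonglongrightarrow> 0"
    unfolding h_def using \<open>prob_space \<nu>\<close> \<open>sets \<nu> = sets borel\<close> \<phi> \<phi>_lim lim
    by (intro tendsto_integral_truncated_dist) (auto intro: prob_space.finite_measure)
  moreover have "bounded (range f)"
    unfolding f_def bounded_iff by (intro exI[of _ 1]) auto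
  ultimately have "AE \<Theta> in M. f \<Theta> = 0"
    using weak_conv_paths_AE_eq_0[OF M Ms w f_cont] by (simp add: f_def)
  then show ?thesis
    by eventually_elim (simp add: f_def min_def split: if_splits)
qed

lemma in_PR_weak_limit:
  fixes Ms :: "nat \<Rightarrow> (real \<Rightarrow>\<^sub>C (real^'n::finite)) measure"
  assumes PR: "\<And>n. in_PR T L blk \<mu>0b R (Ms n)" and M: "path_prob_measure T M"
    and w: "weak_conv_paths T Ms M"
  shows "in_PR T L blk \<mu>0b R M"
proof -
  have Ms: "path_prob_measure T (Ms n)" for n
    using PR by (simp add: in_PR_def)
  define C_const where "C_const = {\<Theta> :: real \<Rightarrow>\<^sub>C (real^'n). \<forall>t\<in>{0..T}. \<forall>i.
      (blk i = 0 \<or> blk i = L) \<longrightarrow> apply_bcontfun \<Theta> t $ i = apply_bcontfun \<Theta> 0 $ i}"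
  define C_lip where "C_lip = {\<Theta> :: real \<Rightarrow>\<^sub>C (real^'n). \<forall>l\<le>L. \<forall>s\<in>{0..T}. \<forall>t\<in>{0..T}.
      norm (bproj (blockset blk l) (apply_bcontfun \<Theta> t - apply_bcontfun \<Theta> s)) \<le> R * \<bar>t - s\<bar>}"
  have "closed C_const"
    unfolding C_const_def Ball_def
    by (intro closed_Collect_all closed_Collect_imp_const closed_Collect_eq continuous_intros continuous_on_id)
  then have "AE \<Theta> in M. \<Theta> \<in> C_const"
    by (rule weak_conv_paths_AE_closed[OF M Ms w]) (use PR in \<open>simp add: in_PR_def C_const_def\<close>)
  moreover have "closed C_lip"
    unfolding C_lip_def Ball_def
    by (intro closed_Collect_all closed_Collect_imp_const closed_Collect_le continuous_intros continuous_on_id)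
  then have "AE \<Theta> in M. \<Theta> \<in> C_lip"
    by (rule weak_conv_paths_AE_closed[OF M Ms w]) (use PR in \<open>simp add: in_PR_def C_lip_def\<close>)
  moreover have "distr M borel (\<lambda>\<Theta>. apply_bcontfun \<Theta> 0) = init_measure L \<mu>0b"
  proof (rule weak_conv_paths_distr_eq[OF M Ms w])
    show "continuous_on UNIV (\<lambda>\<Theta>::real \<Rightarrow>\<^sub>C (real^'n). apply_bcontfun \<Theta> 0)"
      by (intro continuous_intros continuous_on_id)
  qed (use PR in \<open>simp add: in_PR_def\<close>)
  ultimately show ?thesis
    using M unfolding in_PR_def C_const_def C_lip_def by simp
qed

lemma AE_special_relation_weak_limit:
  fixes Fs :: "nat \<Rightarrow> real^'n \<Rightarrow> real \<Rightarrow> real^'n"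
  assumes "0 < T" "0 \<le> R"
    and PR: "\<And>n. in_PR T L blk \<mu>0b R (Ms n)" and M: "path_prob_measure T M"
    and w: "weak_conv_paths T Ms M"
    and special: "\<And>n. special_function T L blk R (Fs n)"
    and graph: "\<And>n. AE \<Theta> in Ms n. \<forall>t\<in>{0..T}.
                  bproj_Lm1 blk L (apply_bcontfun \<Theta> t) = bproj_Lm1 blk L (Fs n (apply_bcontfun \<Theta> 0) t)"
    and "special_function T L blk R F"
    and lim: "\<And>a t. t \<in> {0..T} \<Longrightarrow> (\<lambda>n. bproj_Lm1 blk L (Fs n a t)) \<longlonglongrightarrow> bproj_Lm1 blk L (F a t)"
  shows "AE \<Theta> in M. \<forall>t\<in>{0..T}.
           bproj_Lm1 blk L (apply_bcontfun \<Theta> t) = bproj_Lm1 blk L (F (apply_bcontfun \<Theta> 0) t)"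
proof -
  have Ms: "path_prob_measure T (Ms n)" for n
    using PR by (simp add: in_PR_def)
  have at_time: "AE \<Theta> in M. bproj_Lm1 blk L (apply_bcontfun \<Theta> t) = bproj_Lm1 blk L (F (apply_bcontfun \<Theta> 0) t)"
    if t: "t \<in> {0..T}" for t
  proof (rule weak_conv_paths_AE_eq_limit[OF M Ms w, where \<pi> = "\<lambda>\<Theta>. apply_bcontfun \<Theta> 0"
        and \<psi> = "\<lambda>\<Theta>. bproj_Lm1 blk L (apply_bcontfun \<Theta> t)" and \<phi> = "\<lambda>n a. bproj_Lm1 blk L (Fs n a t)"
        and \<phi>_lim = "\<lambda>a. bproj_Lm1 blk L (F a t)"])
    show "continuous_on UNIV (\<lambda>a. bproj_Lm1 blk L (Fs n a t))" for n
      by (rule special_function_continuous_on_initial[OF special \<open>0 \<le> R\<close> t])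
    show "continuous_on UNIV (\<lambda>a. bproj_Lm1 blk L (F a t))"
      by (rule special_function_continuous_on_initial[OF \<open>special_function T L blk R F\<close> \<open>0 \<le> R\<close> t])
    show "distr (Ms n) borel (\<lambda>\<Theta>. apply_bcontfun \<Theta> 0) = init_measure L \<mu>0b" for n
      using PR by (simp add: in_PR_def)
    show "AE \<Theta> in Ms n. bproj_Lm1 blk L (apply_bcontfun \<Theta> t) = bproj_Lm1 blk L (Fs n (apply_bcontfun \<Theta> 0) t)" for n
      using graph[of n] by eventually_elim (use t in blast)
    show "continuous_on UNIV (\<lambda>\<Theta>::real \<Rightarrow>\<^sub>C (real^'n). apply_bcontfun \<Theta> 0)"
      "continuous_on UNIV (\<lambda>\<Theta>::real \<Rightarrow>\<^sub>C (real^'n). bproj_Lm1 blk L (apply_bcontfun \<Theta> t))"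
      by (intro continuous_intros continuous_on_id)+
    show "(\<lambda>n. bproj_Lm1 blk L (Fs n a t)) \<longlonglongrightarrow> bproj_Lm1 blk L (F a t)" for a
      using lim[OF t] .
  qed
  have "AE \<Theta> in M. \<forall>t\<in>\<rat> \<inter> {0..T}.
      bproj_Lm1 blk L (apply_bcontfun \<Theta> t) = bproj_Lm1 blk L (F (apply_bcontfun \<Theta> 0) t)"
    using at_time by (subst AE_ball_countable) (auto intro: countable_Int1 countable_rat)
  then show ?thesis
  proof eventually_elim
    case (elim \<Theta>)
    have "continuous_on {0..T} (\<lambda>t. bproj_Lm1 blk L (apply_bcontfun \<Theta> t))"
      by (intro continuous_intros) simp
    moreover have "continuous_on {0..T} (\<lambda>t. bproj_Lm1 blk L (F (apply_bcontfun \<Theta> 0) t))"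
      by (rule special_function_continuous_on_time[OF \<open>special_function T L blk R F\<close> \<open>0 \<le> R\<close>])
    ultimately show ?case
      using continuous_on_eq_on_closure[where S = "\<rat> \<inter> {0..T}"] elim
      unfolding closure_Rats_Int_atLeastAtMost[OF \<open>0 < T\<close>] by blast
  qed
qed

theorem theorem8p7:
  fixes T R :: real and L :: nat and blk :: "'n::finite \<Rightarrow> nat"
    and \<mu>0b :: "nat \<Rightarrow> (real^'n) measure"
    and Ms :: "nat \<Rightarrow> (real \<Rightarrow>\<^sub>C (real^'n)) measure"
    and M :: "(real \<Rightarrow>\<^sub>C (real^'n)) measure"
  assumes "T > 0" and "L \<ge> 3"
    and "\<forall>i. blk i \<le> L" and "\<forall>l\<le>L. \<exists>i. blk i = l"
    and "\<forall>l\<le>L. init_block_measure blk l (\<mu>0b l)"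
    and "R > 0"
    and "\<forall>n. special_measure T L blk \<mu>0b R (Ms n)"
    and "path_prob_measure T M"
    and "weak_conv_paths T Ms M"
  shows "special_measure T L blk \<mu>0b R M"
proof -
  have PR: "in_PR T L blk \<mu>0b R (Ms n)" for n
    using assms(7) by (simp add: special_measure_def)
  have "\<forall>n. \<exists>F. special_function T L blk R F \<and> (AE \<Theta> in Ms n. \<forall>t\<in>{0..T}.
      bproj_Lm1 blk L (apply_bcontfun \<Theta> t) = bproj_Lm1 blk L (F (apply_bcontfun \<Theta> 0) t))"
    using assms(7) by (simp add: special_measure_def)
  then obtain Fs where "\<forall>n. special_function T L blk R (Fs n) \<and> (AE \<Theta> in Ms n. \<forall>t\<in>{0..T}.
      bproj_Lm1 blk L (apply_bcontfun \<Theta> t) = bproj_Lm1 blk L (Fs n (apply_bcontfun \<Theta> 0) t))"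
    by (rule choice[THEN exE])
  then have special: "\<And>n. special_function T L blk R (Fs n)"
    and graph: "\<And>n. AE \<Theta> in Ms n. \<forall>t\<in>{0..T}.
      bproj_Lm1 blk L (apply_bcontfun \<Theta> t) = bproj_Lm1 blk L (Fs n (apply_bcontfun \<Theta> 0) t)"
    by blast+
  obtain k F where "strict_mono k" "special_function T L blk R F"
    and "\<And>a t. t \<in> {0..T} \<Longrightarrow> (\<lambda>n. bproj_Lm1 blk L (Fs (k n) a t)) \<longlonglongrightarrow> bproj_Lm1 blk L (F a t)"
    using special_function_convergent_subsequence[where Fs = Fs, OF \<open>T > 0\<close> less_imp_le[OF \<open>R > 0\<close>] special]
    by blast
  then have "AE \<Theta> in M. \<forall>t\<in>{0..T}.
      bproj_Lm1 blk L (apply_bcontfun \<Theta> t) = bproj_Lm1 blk L (F (apply_bcontfun \<Theta> 0) t)"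
    using AE_special_relation_weak_limit[where Ms = "\<lambda>n. Ms (k n)" and Fs = "\<lambda>n. Fs (k n)",
        OF \<open>T > 0\<close> less_imp_le[OF \<open>R > 0\<close>] PR assms(8) weak_conv_paths_subseq[OF assms(9)] special graph]
    by blast
  moreover have "in_PR T L blk \<mu>0b R M"
    by (rule in_PR_weak_limit[OF PR assms(8,9)])
  ultimately show ?thesis
    unfolding special_measure_def using \<open>special_function T L blk R F\<close> by blast
qed

end
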